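(* Let $\Omega$ be an open set in $\mathbb{R}^n$ and $\Gamma$ a closed subset of $\partial\Omega$. Let $1\le q\le\infty$, $\mu\in\mathsf{M}^q(\Omega)$, and let $0\le t\le n(q-1)/q$ if $1\le q<\infty$, resp. $0\le t\le n$ if $q=\infty$. Then $\nu:=\delta_\Gamma^{-t}\mu$ satisfies $\nu\in\mathsf{M}_\Gamma^{qn/(n+qt)}(\Omega)$ if $1\le q<\infty$, and $\nu\in\mathsf{M}_\Gamma^{n/t}(\Omega)$ if $q=\infty$.
   Context: $\delta_\Gamma(x)=\mathrm{dist}(x,\Gamma)$. For $1\le q\le\infty$, $q'=q/(q-1)$ ($1'=\infty$, $\infty'=1$), and $n/\infty=0$ (so $n/0=\infty$ when $t=0$). The Morrey space $\mathsf{M}^q(\Omega)$ is the set of regular signed measures $\mu$ on $\Omega$ with $\sup\{r^{-n/q'}|\mu|(\Omega\cap B(x,r)): x\in\Omega,\ 0<r<\infty\}<\infty$. $\mathsf{M}^q_\Gamma(\Omega)$ is the set of $\nu=\nu_+-\nu_-$ with $\nu_\pm$ nonnegative Radon measures on $\Omega$ and $\sup\{r^{-n/q'}|\nu|(\Omega\cap B(x,r)): x\in\Omega,\ 0<r<\delta_\Gamma(x)/2\}<\infty$. The charge $\delta_\Gamma^{-t}\mu$ is $\varphi\mapsto\int_\Omega\varphi\,\delta_\Gamma^{-t}\,d\mu$. *)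

theory Defs
  imports "HOL-Analysis.Analysis"
begin

text \<open>Scaling exponent n/q' for 1 \<le> q \<le> \<infinity>, with q' = q/(q-1), n/\<infinity> = 0:
  equals n (q-1)/q for finite q and n for q = \<infinity>.\<close>
definition morrey_exp :: "nat \<Rightarrow> ereal \<Rightarrow> real" where
  "morrey_exp n q = (if q = \<infinity> then real n else real n * (1 - 1 / real_of_ereal q))"

text \<open>A (locally finite) signed measure on the open set \<Omega>, given by its Jordan
  decomposition (P, N): two mutually singular nonnegative Radon measures carried by \<Omega>.\<close>
definition signed_radon_on :: "'a::euclidean_space set \<Rightarrow> 'a measure \<Rightarrow> 'a measure \<Rightarrow> bool" where
  "signed_radon_on \<Omega> P N \<longleftrightarrow>
     sets P = sets borel \<and> sets N = sets borel \<and>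
     emeasure P (- \<Omega>) = 0 \<and> emeasure N (- \<Omega>) = 0 \<and>
     (\<exists>A\<in>sets borel. emeasure P A = 0 \<and> emeasure N (- A) = 0) \<and>
     (\<forall>K. compact K \<and> K \<subseteq> \<Omega> \<longrightarrow> emeasure P K < \<infinity> \<and> emeasure N K < \<infinity>)"

definition total_var :: "'a measure \<Rightarrow> 'a measure \<Rightarrow> 'a set \<Rightarrow> ennreal" where
  "total_var P N A = emeasure P A + emeasure N A"

definition Morrey :: "ereal \<Rightarrow> 'a::euclidean_space set \<Rightarrow> ('a measure \<times> 'a measure) set" where
  "Morrey q \<Omega> = {(P, N). signed_radon_on \<Omega> P N \<and>
     (\<exists>C::real. \<forall>x\<in>\<Omega>. \<forall>r>0.
        total_var P N (\<Omega> \<inter> ball x r) \<le> ennreal (C * r powr morrey_exp DIM('a) q))}"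

text \<open>Condition 0 < r < \<delta>_\<Gamma>(x)/2, with \<delta>_\<Gamma> = \<infinity> when \<Gamma> is empty.\<close>
definition below_half_dist :: "'a::euclidean_space set \<Rightarrow> 'a \<Rightarrow> real \<Rightarrow> bool" where
  "below_half_dist \<Gamma> x r \<longleftrightarrow> \<Gamma> = {} \<or> r < infdist x \<Gamma> / 2"

definition Morrey_Gamma :: "ereal \<Rightarrow> 'a::euclidean_space set \<Rightarrow> 'a set \<Rightarrow> ('a measure \<times> 'a measure) set" where
  "Morrey_Gamma q \<Omega> \<Gamma> = {(P, N). signed_radon_on \<Omega> P N \<and>
     (\<exists>C::real. \<forall>x\<in>\<Omega>. \<forall>r>0. below_half_dist \<Gamma> x r \<longrightarrow>
        total_var P N (\<Omega> \<inter> ball x r) \<le> ennreal (C * r powr morrey_exp DIM('a) q))}"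

text \<open>The weight \<delta>_\<Gamma>(x)^(-t), with the convention \<delta>_\<Gamma> = \<infinity> if \<Gamma> = {}.\<close>
definition delta_negpow :: "'a::euclidean_space set \<Rightarrow> real \<Rightarrow> 'a \<Rightarrow> real" where
  "delta_negpow \<Gamma> t x =
     (if \<Gamma> = {} then (if t = 0 then 1 else 0) else infdist x \<Gamma> powr (- t))"

definition weighted_charge :: "'a::euclidean_space set \<Rightarrow> real \<Rightarrow> 'a measure \<times> 'a measure
    \<Rightarrow> 'a measure \<times> 'a measure" where
  "weighted_charge \<Gamma> t \<mu> =
     (density (fst \<mu>) (\<lambda>x. ennreal (delta_negpow \<Gamma> t x)),
      density (snd \<mu>) (\<lambda>x. ennreal (delta_negpow \<Gamma> t x)))"

end

theory Submission
  imports Defs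
begin

(* On a ball B(x, r) with r < \<delta>(x)/2 the triangle inequality gives \<delta> > \<delta>(x) - r > r, so the
   weight \<delta>^(-t) is at most r^(-t) there. Hence the (\<delta>^(-t) \<mu>)-mass of \<Omega> \<inter> B(x, r) is at most
   C r^(n/q' - t), and n/q' - t is exactly the Morrey exponent of the target space. Away from \<Gamma>
   the weight is locally bounded, so \<delta>^(-t) \<mu> is again a signed Radon measure on \<Omega>.
   The upper bounds on t only make the target exponent at least 1; the estimate does not use them. *)

lemma emeasure_density_le_mult:
  fixes f :: "'a \<Rightarrow> ennreal"
  assumes "f \<in> borel_measurable M" and "\<And>x. x \<in> A \<Longrightarrow> f x \<le> c"
  shows "emeasure (density M f) A \<le> c * emeasure M A"
proof (cases "A \<in> sets M")
  case True
  have "emeasure (density M f) A = (\<integral>\<^sup>+x. f x * indicator A x \<partial>M)"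
    using assms(1) True by (rule emeasure_density)
  also have "\<dots> \<le> (\<integral>\<^sup>+x. c * indicator A x \<partial>M)"
    by (intro nn_integral_mono) (auto simp: assms(2) split: split_indicator)
  also have "\<dots> = c * emeasure M A"
    using True by (rule nn_integral_cmult_indicator)
  finally show ?thesis .
next
  case False
  then show ?thesis by (simp add: emeasure_notin_sets)
qed

lemma total_var_density_le_mult:
  fixes f :: "'a \<Rightarrow> ennreal"
  assumes "f \<in> borel_measurable P" and "f \<in> borel_measurable N"
    and "\<And>x. x \<in> A \<Longrightarrow> f x \<le> c"
  shows "total_var (density P f) (density N f) A \<le> c * total_var P N A"
  unfolding total_var_def distrib_left
  using assms by (intro add_mono emeasure_density_le_mult)

lemma signed_radon_on_density:
  fixes f :: "'a::euclidean_space \<Rightarrow> ennreal"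
  assumes PN: "signed_radon_on \<Omega> P N" and f: "f \<in> borel_measurable borel"
    and bounded: "\<And>K. compact K \<Longrightarrow> K \<subseteq> \<Omega> \<Longrightarrow> \<exists>c::real. \<forall>x\<in>K. f x \<le> ennreal c"
  shows "signed_radon_on \<Omega> (density P f) (density N f)"
proof -
  have sets: "sets P = sets borel" "sets N = sets borel"
    using PN by (auto simp: signed_radon_on_def)
  have fP: "f \<in> borel_measurable P" and fN: "f \<in> borel_measurable N"
    using f sets by (auto cong: measurable_cong_sets)
  have null: "emeasure (density M f) A = 0" if "f \<in> borel_measurable M" "emeasure M A = 0" for M A
    \<comment> \<open>the bound c = \<top> suffices, as \<top> * 0 = 0 in ennreal\<close>
    using emeasure_density_le_mult[OF that(1), of A top] that(2) by simp
  obtain A where A: "A \<in> sets borel" "emeasure P A = 0" "emeasure N (- A) = 0"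
    using PN by (auto simp: signed_radon_on_def)
  have finite: "emeasure (density P f) K < \<infinity> \<and> emeasure (density N f) K < \<infinity>"
    if K: "compact K" "K \<subseteq> \<Omega>" for K
  proof -
    obtain c :: real where c: "\<And>x. x \<in> K \<Longrightarrow> f x \<le> ennreal c"
      using bounded[OF K] by blast
    have "emeasure P K < \<infinity>" "emeasure N K < \<infinity>"
      using PN K by (auto simp: signed_radon_on_def)
    then have "ennreal c * emeasure P K < \<infinity>" "ennreal c * emeasure N K < \<infinity>"
      by (simp_all add: ennreal_mult_less_top)
    then show ?thesis
      using emeasure_density_le_mult[OF fP c] emeasure_density_le_mult[OF fN c]
      by (meson le_less_trans)
  qed
  show ?thesis
    using PN A sets finite null[OF fP] null[OF fN]
    by (auto simp: signed_radon_on_def intro!: bexI[of _ A])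
qed

lemma borel_measurable_delta_negpow:
  "(\<lambda>x. ennreal (delta_negpow \<Gamma> t x)) \<in> borel_measurable (borel :: 'a::euclidean_space measure)"
proof -
  have "(\<lambda>x::'a. infdist x \<Gamma>) \<in> borel_measurable borel"
    by (intro borel_measurable_continuous_onI continuous_on_infdist continuous_on_id)
  then show ?thesis
    unfolding delta_negpow_def by measurable
qed

lemma delta_negpow_bounded_on_compact:
  fixes K \<Gamma> :: "'a::euclidean_space set"
  assumes "compact K" and "closed \<Gamma>" and "K \<inter> \<Gamma> = {}" and "0 \<le> t"
  shows "\<exists>c. \<forall>x\<in>K. delta_negpow \<Gamma> t x \<le> c"
proof (cases "\<Gamma> = {} \<or> K = {}")
  case True
  then show ?thesis
    by (auto simp: delta_negpow_def intro!: exI[of _ 1])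
next
  case False
  then have "\<Gamma> \<noteq> {}" and "K \<noteq> {}" by auto
  obtain x0 where x0: "x0 \<in> K" "\<And>y. y \<in> K \<Longrightarrow> infdist x0 \<Gamma> \<le> infdist y \<Gamma>"
    using continuous_attains_inf[OF assms(1) \<open>K \<noteq> {}\<close> continuous_on_infdist[OF continuous_on_id, of K \<Gamma>]]
    by auto
  have "0 < infdist x0 \<Gamma>"
    using x0(1) assms(3) infdist_pos_not_in_closed[OF assms(2) \<open>\<Gamma> \<noteq> {}\<close>] by blast
  then have "\<forall>y\<in>K. delta_negpow \<Gamma> t y \<le> infdist x0 \<Gamma> powr (- t)"
    using \<open>\<Gamma> \<noteq> {}\<close> x0(2) assms(4) by (auto simp: delta_negpow_def intro!: powr_mono2')
  then show ?thesis ..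
qed

lemma delta_negpow_le_radius_powr:
  assumes "below_half_dist \<Gamma> x r" and "dist x y < r" and "0 < r" and "0 \<le> t"
  shows "delta_negpow \<Gamma> t y \<le> r powr (- t)"
proof (cases "\<Gamma> = {}")
  case True
  then show ?thesis using assms(3) by (simp add: delta_negpow_def)
next
  case False
  have "r < infdist x \<Gamma> / 2"
    using assms(1) False by (simp add: below_half_dist_def)
  moreover have "infdist x \<Gamma> \<le> infdist y \<Gamma> + dist x y"
    by (rule infdist_triangle)
  ultimately have "r \<le> infdist y \<Gamma>"
    using assms(2) by linarith
  then show ?thesis
    using False assms(3,4) by (simp add: delta_negpow_def powr_mono2')
qed

lemma weighted_charge_in_Morrey_Gamma:
  fixes \<Omega> \<Gamma> :: "'a::euclidean_space set"
  assumes "open \<Omega>" and "closed \<Gamma>" and "\<Gamma> \<inter> \<Omega> = {}" and "0 \<le> t"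
    and "(P, N) \<in> Morrey q \<Omega>"
    and exp: "morrey_exp DIM('a) p = morrey_exp DIM('a) q - t"
  shows "weighted_charge \<Gamma> t (P, N) \<in> Morrey_Gamma p \<Omega> \<Gamma>"
proof -
  define w where "w = (\<lambda>x. ennreal (delta_negpow \<Gamma> t x))"
  define e where "e = morrey_exp DIM('a) q"
  have PN: "signed_radon_on \<Omega> P N"
    using assms(5) by (simp add: Morrey_def)
  obtain C where C: "\<And>x r. x \<in> \<Omega> \<Longrightarrow> 0 < r \<Longrightarrow> total_var P N (\<Omega> \<inter> ball x r) \<le> ennreal (C * r powr e)"
    using assms(5) by (auto simp: Morrey_def e_def)
  have w: "w \<in> borel_measurable borel"
    unfolding w_def by (rule borel_measurable_delta_negpow)
  have wP: "w \<in> borel_measurable P" and wN: "w \<in> borel_measurable N"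
    using w PN by (auto simp: signed_radon_on_def cong: measurable_cong_sets)
  have "signed_radon_on \<Omega> (density P w) (density N w)"
  proof (rule signed_radon_on_density[OF PN w])
    fix K assume "compact K" "K \<subseteq> \<Omega>"
    then obtain c where "\<forall>x\<in>K. delta_negpow \<Gamma> t x \<le> c"
      using delta_negpow_bounded_on_compact[OF _ assms(2) _ assms(4)] assms(3) by blast
    then show "\<exists>c::real. \<forall>x\<in>K. w x \<le> ennreal c"
      unfolding w_def by (blast intro: ennreal_leI)
  qed
  moreover have "total_var (density P w) (density N w) (\<Omega> \<inter> ball x r) \<le> ennreal (C * r powr (e - t))"
    if x: "x \<in> \<Omega>" and r: "0 < r" and "below_half_dist \<Gamma> x r" for x r
  proof -
    have "w y \<le> ennreal (r powr (- t))" if "y \<in> \<Omega> \<inter> ball x r" for y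
      unfolding w_def using that delta_negpow_le_radius_powr[OF \<open>below_half_dist \<Gamma> x r\<close> _ r assms(4)]
      by (auto intro: ennreal_leI)
    then have "total_var (density P w) (density N w) (\<Omega> \<inter> ball x r)
        \<le> ennreal (r powr (- t)) * total_var P N (\<Omega> \<inter> ball x r)"
      by (rule total_var_density_le_mult[OF wP wN])
    also have "\<dots> \<le> ennreal (r powr (- t)) * ennreal (C * r powr e)"
      by (intro mult_left_mono C[OF x r]) simp
    also have "\<dots> = ennreal (r powr (- t) * (C * r powr e))"
      by (simp add: ennreal_mult')
    also have "r powr (- t) * (C * r powr e) = C * r powr (e - t)"
      by (simp add: powr_add[symmetric] algebra_simps)
    finally show ?thesis .
  qed
  ultimately show ?thesis
    unfolding weighted_charge_def Morrey_Gamma_def w_def[symmetric] e_def exp by auto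
qed

lemma morrey_exp_target:
  fixes q :: ereal and t :: real
  assumes "0 < n" and "1 \<le> q" and "0 \<le> t"
  shows "morrey_exp n (if q \<noteq> \<infinity>
            then ereal (real_of_ereal q * real n / (real n + real_of_ereal q * t))
            else (if t = 0 then \<infinity> else ereal (real n / t))) = morrey_exp n q - t"
proof (cases q)
  case (real r)
  then have "r \<ge> 1" using assms(2) by simp
  then show ?thesis
    using real assms(1,3) by (simp add: morrey_exp_def field_simps)
qed (use assms in \<open>auto simp: morrey_exp_def field_simps\<close>)

theorem proposition6p1:
  fixes \<Omega> \<Gamma> :: "'a::euclidean_space set" and q :: ereal and t :: real
    and \<mu> :: "'a measure \<times> 'a measure"
  assumes "open \<Omega>" and "closed \<Gamma>" and "\<Gamma> \<subseteq> frontier \<Omega>"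
    and "1 \<le> q" and "\<mu> \<in> Morrey q \<Omega>"
    and "0 \<le> t"
    and "q \<noteq> \<infinity> \<Longrightarrow> t \<le> real DIM('a) * (real_of_ereal q - 1) / real_of_ereal q"
    and "q = \<infinity> \<Longrightarrow> t \<le> real DIM('a)"
  shows "weighted_charge \<Gamma> t \<mu> \<in> Morrey_Gamma
           (if q \<noteq> \<infinity>
            then ereal (real_of_ereal q * real DIM('a) / (real DIM('a) + real_of_ereal q * t))
            else (if t = 0 then \<infinity> else ereal (real DIM('a) / t)))
           \<Omega> \<Gamma>"
proof -
  have "\<Gamma> \<inter> \<Omega> = {}"
    using assms(1,3) by (auto simp: frontier_def interior_open)
  moreover have "\<mu> = (fst \<mu>, snd \<mu>)"
    by simp
  ultimately show ?thesis
    using weighted_charge_in_Morrey_Gamma[OF assms(1,2) _ assms(6)] assms(5)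
      morrey_exp_target[OF DIM_positive assms(4,6)] by metis
qed

end
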